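(* Let $n\ge 2$ be an integer, let $\lambda_n:=2^n/(2^n-1)$, and consider $\mathbb{R}^{2n+1}$ with points written as $(x_1,x_2,x_3,y_1,\dots,y_{n-1},z_1,\dots,z_{n-1})$. Let $$K_n:=\Big\{(x_1,x_2,x_3,y_1,\dots,y_{n-1},z_1,\dots,z_{n-1})\;\Big|\; x_3^2\ge y_1^2+z_1^2,\ x_3\ge 0,\ x_3y_i\ge y_{i+1}^2\ (i=1,\dots,n-2),\ x_3y_{n-1}\ge x_1^2,\ x_3z_i\ge z_{i+1}^2\ (i=1,\dots,n-2),\ x_3z_{n-1}\ge x_2^2\Big\},$$ a closed convex cone, and let $K_n^\circ$ be its polar cone. Let $u_1,u_2\ge 0$ be such that $v:=(u_1,u_2,-1,0,\dots,0)$ lies in the boundary of $K_n^\circ$. Then $$N_{K_n^\circ}(v)=\mathrm{cone}(w)=\{\alpha w:\alpha\ge 0\},$$ where $w:=\big(u_1^{\lambda_n/2^n},\,u_2^{\lambda_n/2^n},\,1,\,u_1^{\lambda_n/2^1},\dots,u_1^{\lambda_n/2^{n-1}},\,u_2^{\lambda_n/2^1},\dots,u_2^{\lambda_n/2^{n-1}}\big)$.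
   Context: $\mathbb{R}^{2n+1}$ carries the standard Euclidean inner product. The polar cone of a cone $C$ is $C^\circ=\{v:\langle v,z\rangle\le 0\ \forall z\in C\}$. For a closed convex set $C$ and $\bar z\in C$, the normal cone is $N_C(\bar z)=\{v:\langle v,z-\bar z\rangle\le 0\ \forall z\in C\}$. *)

theory Defs
  imports Complex_Main
begin

text \<open>Points of R^(2n+1) are represented as functions nat => real that vanish at all
indices >= 2n+1. Coordinates (x1,x2,x3,y1..y(n-1),z1..z(n-1)) are stored at indices
0,1,2, 2+i (for y_i), n+1+i (for z_i).\<close>

definition Rsp :: "nat \<Rightarrow> (nat \<Rightarrow> real) set" where
  "Rsp n = {x. \<forall>i\<ge>2*n+1. x i = 0}"

definition ip :: "nat \<Rightarrow> (nat \<Rightarrow> real) \<Rightarrow> (nat \<Rightarrow> real) \<Rightarrow> real" where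
  "ip n a b = (\<Sum>i<2*n+1. a i * b i)"

definition edist :: "nat \<Rightarrow> (nat \<Rightarrow> real) \<Rightarrow> (nat \<Rightarrow> real) \<Rightarrow> real" where
  "edist n a b = sqrt (\<Sum>i<2*n+1. (a i - b i)^2)"

definition polar :: "nat \<Rightarrow> (nat \<Rightarrow> real) set \<Rightarrow> (nat \<Rightarrow> real) set" where
  "polar n C = {v \<in> Rsp n. \<forall>z\<in>C. ip n v z \<le> 0}"

definition normal_cone :: "nat \<Rightarrow> (nat \<Rightarrow> real) set \<Rightarrow> (nat \<Rightarrow> real) \<Rightarrow> (nat \<Rightarrow> real) set" where
  "normal_cone n C zb = {v \<in> Rsp n. \<forall>z\<in>C. ip n v (\<lambda>i. z i - zb i) \<le> 0}"

definition bdry :: "nat \<Rightarrow> (nat \<Rightarrow> real) set \<Rightarrow> (nat \<Rightarrow> real) set" where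
  "bdry n S = {x \<in> Rsp n. \<forall>e>0. (\<exists>y\<in>S. edist n x y < e) \<and>
                                   (\<exists>y\<in>Rsp n - S. edist n x y < e)}"

definition Kn :: "nat \<Rightarrow> (nat \<Rightarrow> real) set" where
  "Kn n = {p \<in> Rsp n.
     (let x1 = p 0; x2 = p 1; x3 = p 2; y = (\<lambda>i. p (2+i)); z = (\<lambda>i. p (n+1+i)) in
       x3^2 \<ge> (y 1)^2 + (z 1)^2 \<and> x3 \<ge> 0 \<and>
       (\<forall>i\<in>{1..n-2}. x3 * y i \<ge> (y (i+1))^2) \<and> x3 * y (n-1) \<ge> x1^2 \<and>
       (\<forall>i\<in>{1..n-2}. x3 * z i \<ge> (z (i+1))^2) \<and> x3 * z (n-1) \<ge> x2^2)}"

definition lam :: "nat \<Rightarrow> real" where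
  "lam n = 2^n / (2^n - 1)"

definition vpt :: "real \<Rightarrow> real \<Rightarrow> nat \<Rightarrow> real" where
  "vpt u1 u2 = (\<lambda>i. if i = 0 then u1 else if i = 1 then u2 else if i = 2 then -1 else 0)"

definition wpt :: "nat \<Rightarrow> real \<Rightarrow> real \<Rightarrow> nat \<Rightarrow> real" where
  "wpt n u1 u2 = (\<lambda>i.
     if i = 0 then u1 powr (lam n / 2^n)
     else if i = 1 then u2 powr (lam n / 2^n)
     else if i = 2 then 1
     else if 3 \<le> i \<and> i \<le> n+1 then u1 powr (lam n / 2^(i-2))
     else if n+2 \<le> i \<and> i \<le> 2*n then u2 powr (lam n / 2^(i-(n+1)))
     else 0)"

end

theory Submission
  imports Defs
begin

(* Write N = 2^n. Along each chain x3 y_i >= y_(i+1)^2 the quantities y_i^(2^(i-1)) decrease,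
   so every point of K_n satisfies |x1|^N + |x2|^N <= x3^N, with equality exactly on the rays
   through extreme_pt n d1 d2 with d1^N + d2^N = 1. Put u_i = c_i^(N-1). By AM-GM (Hoelder's
   inequality for the conjugate exponents N and lambda_n = N/(N-1)), u1 x1 + u2 x2 <= x3 holds on
   K_n with room to spare when c1^N + c2^N < 1, so then a neighbourhood of v lies in the polar;
   testing v against the extreme points shows c1^N + c2^N <= 1 whenever v is in the polar. So on
   the boundary c1^N + c2^N = 1.
   A normal vector w at v is nonpositive on the polar and orthogonal to v. Every defining
   inequality of K_n is a rotated or Lorentz second-order cone constraint, and testing w against
   the dual cone vectors puts w in K_n. Orthogonality to v is then the equality case of AM-GM,
   which forces w onto the ray through extreme_pt n c1 c2 = wpt n u1 u2. *)

section \<open>Inner products and polar cones\<close>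

definition unit_vec :: "nat \<Rightarrow> nat \<Rightarrow> real" where
  "unit_vec j i = (if i = j then 1 else 0)"

lemma ip_commute: "ip n a b = ip n b a"
  unfolding ip_def by (simp add: mult.commute)

lemma ip_add_right: "ip n a (\<lambda>i. b i + c i) = ip n a b + ip n a c"
  unfolding ip_def by (simp add: distrib_left sum.distrib)

lemma ip_diff_right: "ip n a (\<lambda>i. b i - c i) = ip n a b - ip n a c"
  unfolding ip_def by (simp add: right_diff_distrib sum_subtractf)

lemma ip_diff_left: "ip n (\<lambda>i. a i - b i) c = ip n a c - ip n b c"
  unfolding ip_def by (simp add: left_diff_distrib sum_subtractf)

lemma ip_scale_right: "ip n a (\<lambda>i. x * b i) = x * ip n a b"
  unfolding ip_def sum_distrib_left by (simp add: mult.left_commute)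

lemma ip_scale_left: "ip n (\<lambda>i. x * a i) b = x * ip n a b"
  unfolding ip_def sum_distrib_left by (simp add: mult.assoc)

lemma ip_zero_right [simp]: "ip n a (\<lambda>i. 0) = 0"
  unfolding ip_def by simp

lemma ip_unit_vec: "j < 2*n+1 \<Longrightarrow> ip n a (unit_vec j) = a j"
  unfolding ip_def unit_vec_def by (simp add: if_distrib[of "\<lambda>t. _ * t"] cong: if_cong)

lemma edist_commute: "edist n x y = edist n y x"
  unfolding edist_def by (simp add: power2_commute)

lemma edist_nonneg: "0 \<le> edist n x y"
  unfolding edist_def by (intro real_sqrt_ge_zero sum_nonneg) simp

lemma abs_le_edist:
  assumes "i < 2*n+1"
  shows "\<bar>x i - y i\<bar> \<le> edist n x y"
proof -
  have "(x i - y i)^2 \<le> (\<Sum>j<2*n+1. (x j - y j)^2)"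
    using assms by (intro member_le_sum) auto
  then show ?thesis unfolding edist_def by (metis real_sqrt_abs real_sqrt_le_mono)
qed

lemma ip_diff_le_edist: "ip n (\<lambda>i. x i - y i) k \<le> edist n x y * (\<Sum>i<2*n+1. \<bar>k i\<bar>)"
proof -
  have "ip n (\<lambda>i. x i - y i) k \<le> (\<Sum>i<2*n+1. \<bar>x i - y i\<bar> * \<bar>k i\<bar>)"
    unfolding ip_def by (intro sum_mono) (metis abs_ge_self abs_mult)
  also have "\<dots> \<le> (\<Sum>i<2*n+1. edist n x y * \<bar>k i\<bar>)"
    by (intro sum_mono mult_right_mono abs_le_edist) auto
  finally show ?thesis by (simp only: sum_distrib_left)
qed

lemma polarI: "t \<in> Rsp n \<Longrightarrow> (\<And>k. k \<in> C \<Longrightarrow> ip n t k \<le> 0) \<Longrightarrow> t \<in> polar n C"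
  unfolding polar_def by blast

lemma bdry_polar_subset: "bdry n (polar n C) \<subseteq> polar n C"
proof
  fix x assume x: "x \<in> bdry n (polar n C)"
  show "x \<in> polar n C"
  proof (rule polarI)
    show "x \<in> Rsp n" using x unfolding bdry_def by blast
  next
    fix k assume k: "k \<in> C"
    define M where "M = (\<Sum>i<2*n+1. \<bar>k i\<bar>)"
    have M: "0 \<le> M" unfolding M_def by (simp add: sum_nonneg)
    show "ip n x k \<le> 0"
    proof (rule field_le_epsilon)
      fix e :: real assume "0 < e"
      then have "0 < e / (M + 1)" using M by simp
      then obtain y where y: "y \<in> polar n C" "edist n x y < e / (M + 1)"
        using x unfolding bdry_def by blast
      have "ip n (\<lambda>i. x i - y i) k \<le> edist n x y * M"
        using ip_diff_le_edist unfolding M_def .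
      also have "\<dots> \<le> e / (M + 1) * M"
        using y(2) M by (intro mult_right_mono) auto
      also have "\<dots> \<le> e"
        using \<open>0 < e\<close> M by (simp add: field_simps)
      finally have "ip n x k - ip n y k \<le> e" by (simp add: ip_diff_left)
      moreover have "ip n y k \<le> 0" using y(1) k unfolding polar_def by blast
      ultimately show "ip n x k \<le> 0 + e" by simp
    qed
  qed
qed

lemma normal_cone_polar_iff:
  assumes v: "v \<in> polar n C"
  shows "w \<in> normal_cone n (polar n C) v \<longleftrightarrow>
           w \<in> Rsp n \<and> (\<forall>z\<in>polar n C. ip n w z \<le> 0) \<and> ip n w v = 0"
proof
  assume "w \<in> normal_cone n (polar n C) v"
  then have w: "w \<in> Rsp n" and hw: "\<And>z. z \<in> polar n C \<Longrightarrow> ip n w z \<le> ip n w v"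
    unfolding normal_cone_def by (auto simp: ip_diff_right)
  have "(\<lambda>i. 0) \<in> polar n C" "(\<lambda>i. 2 * v i) \<in> polar n C"
    using v unfolding polar_def Rsp_def by (auto simp: ip_scale_left ip_commute[of n "\<lambda>i. 0"])
  then have "ip n w (\<lambda>i. 0) \<le> ip n w v" "ip n w (\<lambda>i. 2 * v i) \<le> ip n w v"
    using hw by blast+
  then have "ip n w v = 0"
    unfolding ip_scale_right by simp
  with w hw show "w \<in> Rsp n \<and> (\<forall>z\<in>polar n C. ip n w z \<le> 0) \<and> ip n w v = 0"
    by auto
next
  assume "w \<in> Rsp n \<and> (\<forall>z\<in>polar n C. ip n w z \<le> 0) \<and> ip n w v = 0"
  then show "w \<in> normal_cone n (polar n C) v"
    unfolding normal_cone_def by (simp add: ip_diff_right)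
qed

lemma rotated_cone_dual_ineq:
  fixes a b g x y z :: real
  assumes "0 \<le> a" "0 \<le> b" "0 \<le> x" "0 \<le> y" "g^2 \<le> 4*a*b" "z^2 \<le> x*y"
  shows "0 \<le> a*x + b*y + g*z"
proof -
  have "(g*z)^2 \<le> (4*a*b) * (x*y)"
    unfolding power_mult_distrib using assms by (intro mult_mono) auto
  also have "\<dots> \<le> (a*x + b*y)^2"
    using zero_le_power2[of "a*x - b*y"] by (simp add: power2_eq_square algebra_simps)
  finally have "\<bar>g*z\<bar> \<le> a*x + b*y"
    using assms by (simp add: power2_le_iff_abs_le)
  then show ?thesis by linarith
qed

lemma lorentz_cone_dual_ineq:
  fixes b c x y z :: real
  assumes "y^2 + z^2 \<le> x^2" "0 \<le> x"
  shows "b*y + c*z \<le> sqrt (b^2 + c^2) * x"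
proof -
  have "(b*y + c*z)^2 \<le> (b^2 + c^2) * (y^2 + z^2)"
    using zero_le_power2[of "b*z - c*y"] by (simp add: power2_eq_square algebra_simps)
  also have "\<dots> \<le> (sqrt (b^2 + c^2) * x)^2"
    using assms by (simp add: power_mult_distrib mult_left_mono)
  finally have "\<bar>b*y + c*z\<bar> \<le> sqrt (b^2 + c^2) * x"
    using assms by (simp add: power2_le_iff_abs_le)
  then show ?thesis by linarith
qed

lemma bipolar_abs_le:
  assumes j: "j < 2*n+1" "j0 < 2*n+1"
    and C: "\<And>k. k \<in> C \<Longrightarrow> \<bar>k j\<bar> \<le> k j0"
    and hw: "\<And>z. z \<in> polar n C \<Longrightarrow> ip n w z \<le> 0"
  shows "\<bar>w j\<bar> \<le> w j0"
proof -
  have "\<sigma> * w j - w j0 \<le> 0" if \<sigma>: "\<bar>\<sigma>\<bar> = 1" for \<sigma>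
  proof -
    define t where "t = (\<lambda>i. \<sigma> * unit_vec j i + (-1) * unit_vec j0 i)"
    have ip_t: "ip n p t = \<sigma> * p j - p j0" for p
      using j unfolding t_def ip_add_right ip_scale_right by (simp add: ip_unit_vec)
    have "t \<in> polar n C"
    proof (rule polarI)
      show "t \<in> Rsp n" using j unfolding t_def Rsp_def unit_vec_def by auto
    next
      fix k assume k: "k \<in> C"
      have "\<sigma> * k j \<le> \<bar>k j\<bar>" using \<sigma> by (metis abs_ge_self abs_mult mult_1)
      then show "ip n t k \<le> 0" using C[OF k] by (simp add: ip_commute[of n t] ip_t)
    qed
    then show ?thesis using hw ip_t by fastforce
  qed
  from this[of 1] this[of "-1"] show ?thesis by simp
qed

lemma bipolar_rotated_cone:
  assumes j: "j0 < 2*n+1" "j1 < 2*n+1" "j2 < 2*n+1"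
    and C: "\<And>k. k \<in> C \<Longrightarrow> 0 \<le> k j0 \<and> 0 \<le> k j1 \<and> (k j2)^2 \<le> k j0 * k j1"
    and hw: "\<And>z. z \<in> polar n C \<Longrightarrow> ip n w z \<le> 0"
    and w0: "0 < w j0"
  shows "(w j2)^2 \<le> w j0 * w j1"
proof -
  \<comment> \<open>The dual rotated cone condition \<open>g^2 \<le> 4ab\<close> is tight for this choice, and it makes
    \<open>ip n w t = - w j0 * (w j0 * w j1 - (w j2)^2)\<close>.\<close>
  define a b g where "a = (w j2)^2" and "b = (w j0)^2" and "g = -2 * w j0 * w j2"
  define t where "t = (\<lambda>i. (-a) * unit_vec j0 i + ((-b) * unit_vec j1 i + (-g) * unit_vec j2 i))"
  have ip_t: "ip n p t = - (a * p j0 + b * p j1 + g * p j2)" for p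
    using j unfolding t_def ip_add_right ip_scale_right by (simp add: ip_unit_vec)
  have "t \<in> polar n C"
  proof (rule polarI)
    show "t \<in> Rsp n" using j unfolding t_def Rsp_def unit_vec_def by auto
  next
    fix k assume "k \<in> C"
    moreover have "g^2 \<le> 4*a*b" unfolding a_def b_def g_def by (simp add: power2_eq_square)
    ultimately show "ip n t k \<le> 0"
      using C[of k] rotated_cone_dual_ineq[of a b "k j0" "k j1" g "k j2"]
      by (simp add: ip_commute[of n t] ip_t a_def b_def)
  qed
  then have "0 \<le> a * w j0 + b * w j1 + g * w j2" using hw ip_t[of w] by fastforce
  then have "0 \<le> w j0 * (w j0 * w j1 - (w j2)^2)"
    unfolding a_def b_def g_def by (simp add: power2_eq_square algebra_simps)
  then show ?thesis using w0 by (simp add: zero_le_mult_iff)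
qed

lemma bipolar_lorentz_cone:
  assumes j: "j0 < 2*n+1" "j1 < 2*n+1" "j2 < 2*n+1"
    and C: "\<And>k. k \<in> C \<Longrightarrow> 0 \<le> k j0 \<and> (k j1)^2 + (k j2)^2 \<le> (k j0)^2"
    and hw: "\<And>z. z \<in> polar n C \<Longrightarrow> ip n w z \<le> 0"
    and w0: "0 \<le> w j0"
  shows "(w j1)^2 + (w j2)^2 \<le> (w j0)^2"
proof -
  define r where "r = sqrt ((w j1)^2 + (w j2)^2)"
  define t where "t = (\<lambda>i. (-r) * unit_vec j0 i + (w j1 * unit_vec j1 i + w j2 * unit_vec j2 i))"
  have ip_t: "ip n p t = w j1 * p j1 + w j2 * p j2 - r * p j0" for p
    using j unfolding t_def ip_add_right ip_scale_right by (simp add: ip_unit_vec)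
  have "t \<in> polar n C"
  proof (rule polarI)
    show "t \<in> Rsp n" using j unfolding t_def Rsp_def unit_vec_def by auto
  next
    fix k assume "k \<in> C"
    then show "ip n t k \<le> 0"
      using C[of k] lorentz_cone_dual_ineq[of "k j1" "k j2" "k j0" "w j1" "w j2"]
      by (simp add: ip_commute[of n t] ip_t r_def)
  qed
  then have "ip n w t \<le> 0" by (rule hw)
  moreover have r: "0 \<le> r" "r^2 = (w j1)^2 + (w j2)^2" unfolding r_def by simp_all
  ultimately have "r * r \<le> r * w j0" using ip_t[of w] by (simp add: power2_eq_square)
  then have "r \<le> w j0" using r(1) w0 by (cases "r = 0") (simp_all add: mult_le_cancel_left)
  then show ?thesis using r by (metis power_mono)
qed

section \<open>Chains of rotated quadratic cones\<close>

definition sq_chain :: "real \<Rightarrow> (nat \<Rightarrow> real) \<Rightarrow> real \<Rightarrow> nat \<Rightarrow> bool" where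
  "sq_chain c y x m \<longleftrightarrow> (\<forall>i\<in>{1..m-1}. (y (i+1))^2 \<le> c * y i) \<and> x^2 \<le> c * y m"

lemma bipolar_sq_chain:
  assumes j: "j0 < 2*n+1" "off + m < 2*n+1" "xi < 2*n+1" and m: "1 \<le> m"
    and C: "\<And>k. k \<in> C \<Longrightarrow>
              0 \<le> k j0 \<and> (\<forall>i\<in>{1..m}. 0 \<le> k (off+i)) \<and> sq_chain (k j0) (\<lambda>i. k (off+i)) (k xi) m"
    and hw: "\<And>z. z \<in> polar n C \<Longrightarrow> ip n w z \<le> 0"
    and w0: "0 < w j0"
  shows "sq_chain (w j0) (\<lambda>i. w (off+i)) (w xi) m"
  unfolding sq_chain_def
proof (intro conjI ballI)
  fix i assume i: "i \<in> {1..m-1}"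
  show "(w (off+(i+1)))^2 \<le> w j0 * w (off+i)"
  proof (rule bipolar_rotated_cone[OF j(1) _ _ _ hw w0])
    show "off+i < 2*n+1" "off+(i+1) < 2*n+1" using i j by auto
  next
    fix k assume "k \<in> C"
    then show "0 \<le> k j0 \<and> 0 \<le> k (off+i) \<and> (k (off+(i+1)))^2 \<le> k j0 * k (off+i)"
      using C i unfolding sq_chain_def by auto
  qed
next
  show "(w xi)^2 \<le> w j0 * w (off+m)"
  proof (rule bipolar_rotated_cone[OF j(1) j(2) j(3) _ hw w0])
    fix k assume "k \<in> C"
    then show "0 \<le> k j0 \<and> 0 \<le> k (off+m) \<and> (k xi)^2 \<le> k j0 * k (off+m)"
      using C m unfolding sq_chain_def by auto
  qed
qed

lemma sq_chain_scale:
  assumes "0 \<le> a" "sq_chain c y x m"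
  shows "sq_chain (a * c) (\<lambda>i. a * y i) (a * x) m"
proof -
  have "(a * s)^2 \<le> (a * c) * (a * t)" if "s^2 \<le> c * t" for s t
    using mult_left_mono[OF that zero_le_power2[of a]]
    by (simp add: power2_eq_square algebra_simps)
  then show ?thesis using assms(2) unfolding sq_chain_def by auto
qed

lemma sq_chain_bounds:
  assumes c: "0 \<le> c" and y1: "\<bar>y 1\<bar> \<le> c" and ch: "sq_chain c y x m" and m: "1 \<le> m"
  shows "(\<forall>i\<in>{1..m}. 0 \<le> y i \<and> y i \<le> c) \<and> \<bar>x\<bar> \<le> c"
proof -
  have sq: "\<bar>s\<bar> \<le> c" if "s^2 \<le> c * t" "\<bar>t\<bar> \<le> c" for s t
  proof -
    have "c * t \<le> c * c" using that(2) c by (intro mult_left_mono) auto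
    then have "s^2 \<le> c^2" using that(1) by (simp add: power2_eq_square)
    then show ?thesis using c by (simp add: power2_le_iff_abs_le)
  qed
  have abs_y: "\<bar>y i\<bar> \<le> c" if "i \<in> {1..m}" for i
  proof -
    have "1 \<le> i" "i \<le> m" using that by auto
    from this(1) show ?thesis
    proof (induction rule: dec_induct)
      case base then show ?case by (rule y1)
    next
      case (step k)
      then show ?case using ch sq[of "y (Suc k)" "y k"] \<open>i \<le> m\<close> unfolding sq_chain_def by auto
    qed
  qed
  have "0 \<le> y i" if i: "i \<in> {1..m}" for i
  proof -
    have "0 \<le> c * y i"
      using ch i unfolding sq_chain_def
      by (cases "i = m") (auto intro: order_trans[OF zero_le_power2])
    then show ?thesis using abs_y[OF i] c by (cases "c = 0") (auto simp: zero_le_mult_iff)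
  qed
  moreover have "\<bar>x\<bar> \<le> c" using ch m abs_y[of m] sq unfolding sq_chain_def by auto
  ultimately show ?thesis using abs_y by auto
qed

lemma power2_le_imp_power_two_pow_le:
  fixes s t :: real
  assumes "s^2 \<le> t" "1 \<le> k"
  shows "s^(2^k) \<le> t^(2^(k-1))"
proof -
  have "(s^2)^(2^(k-1)) \<le> t^(2^(k-1))" using assms(1) by (simp add: power_mono)
  moreover have "2 * 2^(k-1) = (2::nat)^k" using assms(2) by (cases k) auto
  ultimately show ?thesis by (metis power_mult)
qed

lemma sq_chain_one_le_first:
  assumes ch: "sq_chain 1 y x m" and j: "j \<in> {1..m}"
  shows "(y j)^(2^(j-1)) \<le> y 1"
proof -
  have "1 \<le> j" "j \<le> m" using j by auto
  from this(1) show ?thesis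
  proof (induction rule: dec_induct)
    case (step k)
    have "(y (Suc k))^2 \<le> y k" using ch step \<open>j \<le> m\<close> unfolding sq_chain_def by auto
    then have "(y (Suc k))^(2^k) \<le> (y k)^(2^(k-1))"
      using step by (intro power2_le_imp_power_two_pow_le) auto
    then show ?case using step.IH by simp
  qed simp
qed

lemma sq_chain_one_last_le:
  assumes ch: "sq_chain 1 y x m" and j: "j \<in> {1..m}"
  shows "x^(2^m) \<le> (y j)^(2^(j-1))"
proof -
  have "j \<le> m" using j by auto
  then show ?thesis
  proof (induction rule: inc_induct)
    case base
    show ?case using ch j by (intro power2_le_imp_power_two_pow_le) (auto simp: sq_chain_def)
  next
    case (step k)
    have "(y (Suc k))^2 \<le> y k" using ch step j unfolding sq_chain_def by auto
    then have "(y (Suc k))^(2^k) \<le> (y k)^(2^(k-1))"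
      using step j by (intro power2_le_imp_power_two_pow_le) auto
    then show ?case using step.IH by simp
  qed
qed

lemma sq_chain_one_pow_le:
  assumes ch: "sq_chain 1 y x m" and m: "1 \<le> m"
  shows "\<bar>x\<bar>^(2^(m+1)) \<le> (y 1)^2"
proof -
  have "x^(2^m) \<le> y 1" using sq_chain_one_last_le[OF ch, of 1] m by simp
  moreover have "0 \<le> x^(2^m)" using m by (simp add: zero_le_even_power)
  ultimately have "(x^(2^m))^2 \<le> (y 1)^2" by (simp add: power_mono)
  moreover have "\<bar>x\<bar>^(2^(m+1)) = (x^(2^m))^2"
    by (simp add: power_mult[symmetric] mult.commute power_even_abs)
  ultimately show ?thesis by simp
qed

lemma sq_chain_one_tight:
  assumes ch: "sq_chain 1 y c m" and m: "1 \<le> m" and c: "0 \<le> c"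
    and y_nonneg: "\<forall>i\<in>{1..m}. 0 \<le> y i" and y1: "(y 1)^2 \<le> c^(2^(m+1))"
    and j: "j \<in> {1..m}"
  shows "y j = c^(2^(m+1-j))"
proof (rule power_eq_imp_eq_base)
  have "(y 1)^2 = (c^(2^m))^2"
    using y1 sq_chain_one_pow_le[OF ch m] c by (simp add: power_mult[symmetric] mult.commute)
  then have "y 1 = c^(2^m)"
    using y_nonneg m c by simp
  then have "(y j)^(2^(j-1)) = c^(2^m)"
    using sq_chain_one_last_le[OF ch j] sq_chain_one_le_first[OF ch j] by simp
  also have "\<dots> = (c^(2^(m+1-j)))^(2^(j-1))"
    using j by (simp flip: power_mult power_add)
  finally show "(y j)^(2^(j-1)) = (c^(2^(m+1-j)))^(2^(j-1))" .
qed (use y_nonneg j c in auto)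

lemma sq_chain_one_powers:
  assumes m: "1 \<le> m" and y: "\<And>i. i \<in> {1..m} \<Longrightarrow> y i = d^(2^(m+1-i))"
  shows "sq_chain 1 y d m"
proof -
  have sq: "(d^(2^k))^2 = d^(2^Suc k)" for k
    by (simp add: power_mult[symmetric] mult.commute)
  have "(y (i+1))^2 \<le> y i" if "i \<in> {1..m-1}" for i
  proof -
    have e: "m + 1 - (i+1) = m - i" "m + 1 - i = Suc (m - i)" using that by auto
    have "y (i+1) = d^(2^(m-i))" "y i = d^(2^Suc (m-i))"
      using that y[of "i+1", unfolded e(1)] y[of i, unfolded e(2)] by auto
    then show ?thesis using sq by simp
  qed
  moreover have "d^2 \<le> y m" using y[of m] m by simp
  ultimately show ?thesis unfolding sq_chain_def by simp
qed

section \<open>The AM-GM inequality for one power\<close>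

lemma am_gm_power_gap:
  fixes c s :: real
  shows "s^N + (real N - 1) * c^N - real N * c^(N-1) * s
           = (\<Sum>k<N. c^(N - Suc k) * ((s - c) * (s^k - c^k)))"
proof -
  have "(\<Sum>k<N. c^(N - Suc k) * ((s - c) * (s^k - c^k)))
      = (\<Sum>k<N. (s - c) * (c^(N - Suc k) * s^k) - (s - c) * (c^(N - Suc k) * c^k))"
    by (intro sum.cong refl) (simp add: algebra_simps)
  also have "\<dots> = (s - c) * (\<Sum>k<N. c^(N - Suc k) * s^k) - (s - c) * (\<Sum>k<N. c^(N - Suc k) * c^k)"
    by (simp add: sum_distrib_left sum_subtractf)
  also have "(\<Sum>k<N. c^(N - Suc k) * c^k) = (\<Sum>k<N. c^(N-1))"
    by (intro sum.cong refl) (simp flip: power_add)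
  also have "(s - c) * (\<Sum>k<N. c^(N - Suc k) * s^k) = s^N - c^N"
    by (rule power_diff_sumr2[symmetric])
  finally show ?thesis
    by (cases N) (simp_all add: algebra_simps)
qed

lemma diff_mult_power_diff_nonneg:
  fixes c s :: real
  assumes "0 \<le> c" "0 \<le> s"
  shows "0 \<le> (s - c) * (s^k - c^k)"
  using assms power_mono[of s c k] power_mono[of c s k]
  by (cases "c \<le> s") (auto intro: mult_nonneg_nonneg mult_nonpos_nonpos)

lemma am_gm_power:
  fixes c s :: real
  assumes "0 \<le> c" "0 \<le> s"
  shows "real N * c^(N-1) * s \<le> s^N + (real N - 1) * c^N"
proof -
  have "0 \<le> (\<Sum>k<N. c^(N - Suc k) * ((s - c) * (s^k - c^k)))"
    by (intro sum_nonneg) (metis assms diff_mult_power_diff_nonneg mult_nonneg_nonneg zero_le_power)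
  then show ?thesis using am_gm_power_gap[of s N c] by linarith
qed

lemma am_gm_power_eq_imp_eq:
  fixes c s :: real
  assumes "0 \<le> c" "0 \<le> s" "2 \<le> N"
    and eq: "real N * c^(N-1) * s = s^N + (real N - 1) * c^N"
  shows "s = c"
proof (rule ccontr)
  assume "s \<noteq> c"
  then have "0 < (s - c) * (s^(N-1) - c^(N-1))"
    using assms power_strict_mono[of s c "N-1"] power_strict_mono[of c s "N-1"]
    by (cases "c < s") (auto intro: mult_pos_pos mult_neg_neg)
  also have "\<dots> = c^(N - Suc (N-1)) * ((s - c) * (s^(N-1) - c^(N-1)))"
    using assms by simp
  also have "\<dots> \<le> (\<Sum>k<N. c^(N - Suc k) * ((s - c) * (s^k - c^k)))"
    using assms diff_mult_power_diff_nonneg by (intro member_le_sum) auto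
  finally show False using am_gm_power_gap[of s N c] eq by linarith
qed

lemma am_gm_power_pair:
  fixes c1 c2 s t :: real
  assumes c: "0 \<le> c1" "0 \<le> c2" and st: "\<bar>s\<bar>^N + \<bar>t\<bar>^N \<le> 1"
  shows "real N * (c1^(N-1) * s + c2^(N-1) * t) \<le> 1 + (real N - 1) * (c1^N + c2^N)"
proof -
  have "real N * (c1^(N-1) * s + c2^(N-1) * t)
          \<le> real N * c1^(N-1) * \<bar>s\<bar> + real N * c2^(N-1) * \<bar>t\<bar>"
    using c by (simp add: distrib_left mult.assoc add_mono mult_left_mono)
  also have "\<dots> \<le> \<bar>s\<bar>^N + (real N - 1) * c1^N + (\<bar>t\<bar>^N + (real N - 1) * c2^N)"
    using c by (intro add_mono am_gm_power) auto
  finally show ?thesis using st by (simp add: algebra_simps)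
qed

lemma am_gm_power_pair_eq:
  fixes c1 c2 s t :: real
  assumes N: "2 \<le> N" and c: "0 \<le> c1" "0 \<le> c2" and S: "c1^N + c2^N = 1"
    and st: "\<bar>s\<bar>^N + \<bar>t\<bar>^N \<le> 1" and eq: "c1^(N-1) * s + c2^(N-1) * t = 1"
  shows "s = c1 \<and> t = c2"
proof -
  define a b where "a = c1^(N-1)" and "b = c2^(N-1)"
  have ams: "real N * (a * \<bar>s\<bar>) \<le> \<bar>s\<bar>^N + (real N - 1) * c1^N"
    and amt: "real N * (b * \<bar>t\<bar>) \<le> \<bar>t\<bar>^N + (real N - 1) * c2^N"
    unfolding a_def b_def using am_gm_power c abs_ge_zero by (metis mult.assoc)+
  have s: "real N * (a * s) \<le> real N * (a * \<bar>s\<bar>)" and t: "real N * (b * t) \<le> real N * (b * \<bar>t\<bar>)"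
    unfolding a_def b_def using c by (simp_all add: mult_left_mono)
  have "real N * (a * s) + real N * (b * t) = real N"
    using eq unfolding a_def b_def by (metis distrib_left mult.right_neutral)
  moreover have "(real N - 1) * c1^N + (real N - 1) * c2^N = real N - 1"
    using S by (simp flip: distrib_left)
  \<comment> \<open>The chain of inequalities of \<open>am_gm_power_pair\<close> is an equality here, so each step is tight.\<close>
  ultimately have tight: "real N * (a * \<bar>s\<bar>) = \<bar>s\<bar>^N + (real N - 1) * c1^N"
      "real N * (b * \<bar>t\<bar>) = \<bar>t\<bar>^N + (real N - 1) * c2^N"
      "real N * (a * s) = real N * (a * \<bar>s\<bar>)" "real N * (b * t) = real N * (b * \<bar>t\<bar>)"
    using ams amt s t st by linarith+
  have "\<bar>s\<bar> = c1" "\<bar>t\<bar> = c2"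
    using am_gm_power_eq_imp_eq[OF c(1) _ N] am_gm_power_eq_imp_eq[OF c(2) _ N] tight(1,2)
    unfolding a_def b_def by (auto simp: mult.assoc)
  moreover have "a * s = a * \<bar>s\<bar>" "b * t = b * \<bar>t\<bar>" using tight(3,4) N by simp_all
  ultimately show ?thesis
    unfolding a_def b_def using N by (cases "c1 = 0"; cases "c2 = 0") auto
qed

section \<open>The cone \<open>K\<^sub>n\<close>\<close>

lemma coord_cases:
  fixes n i :: nat
  obtains "i = 0" | "i = 1" | "i = 2"
    | j where "j \<in> {1..n-1}" "i = 2 + j"
    | j where "j \<in> {1..n-1}" "i = n + 1 + j"
    | "2*n + 1 \<le> i"
proof -
  consider "i \<le> 2" | "3 \<le> i" "i \<le> n+1" | "n+2 \<le> i" "i \<le> 2*n" | "2*n + 1 \<le> i"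
    by linarith
  then show ?thesis
  proof cases
    case 1 then show ?thesis using that by (metis le_SucE le_zero_eq One_nat_def numeral_2_eq_2)
  next
    case 2 then show ?thesis using that(4)[of "i - 2"] by auto
  next
    case 3
    then have "i - (n+1) \<in> {1..n-1}" "i = n + 1 + (i - (n+1))" by auto
    then show ?thesis by (rule that(5))
  qed (use that in auto)
qed

lemma Kn_iff:
  "p \<in> Kn n \<longleftrightarrow> p \<in> Rsp n \<and> 0 \<le> p 2 \<and> (p 3)^2 + (p (n+2))^2 \<le> (p 2)^2 \<and>
     sq_chain (p 2) (\<lambda>i. p (2+i)) (p 0) (n-1) \<and> sq_chain (p 2) (\<lambda>i. p (n+1+i)) (p 1) (n-1)"
proof -
  have "n - 2 = n - 1 - 1" "(2::nat) + 1 = 3" "n + 1 + 1 = n + 2" by simp_all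
  then show ?thesis unfolding Kn_def sq_chain_def Let_def by auto
qed

lemma Kn_chain_bounds:
  assumes p: "p \<in> Kn n" and n: "2 \<le> n" and i: "i \<in> {1..n-1}"
  shows "0 \<le> p (2+i) \<and> p (2+i) \<le> p 2 \<and> 0 \<le> p (n+1+i) \<and> p (n+1+i) \<le> p 2"
proof -
  have top: "0 \<le> p 2" "(p 3)^2 + (p (n+2))^2 \<le> (p 2)^2" using p unfolding Kn_iff by simp_all
  then have "(p 3)^2 \<le> (p 2)^2" "(p (n+2))^2 \<le> (p 2)^2"
    using zero_le_power2[of "p 3"] zero_le_power2[of "p (n+2)"] by linarith+
  then have "\<bar>p 3\<bar> \<le> p 2" "\<bar>p (n+2)\<bar> \<le> p 2"
    using top(1) by (simp_all add: power2_le_iff_abs_le)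
  then show ?thesis
    using sq_chain_bounds[of "p 2" "\<lambda>i. p (2+i)" "p 0" "n-1"]
      sq_chain_bounds[of "p 2" "\<lambda>i. p (n+1+i)" "p 1" "n-1"] p n i top(1)
    unfolding Kn_iff by (simp add: numeral_3_eq_3)
qed

lemma Kn_abs_le:
  assumes p: "p \<in> Kn n" and n: "2 \<le> n"
  shows "\<bar>p j\<bar> \<le> p 2"
proof -
  have "\<bar>p 0\<bar> \<le> p 2 \<and> \<bar>p 1\<bar> \<le> p 2"
    using sq_chain_bounds[of "p 2" "\<lambda>i. p (2+i)" "p 0" "n-1"]
      sq_chain_bounds[of "p 2" "\<lambda>i. p (n+1+i)" "p 1" "n-1"]
      Kn_chain_bounds[OF p n, of 1] p n
    unfolding Kn_iff by auto
  then show ?thesis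
    using Kn_chain_bounds[OF p n] p unfolding Kn_iff Rsp_def
    by (cases rule: coord_cases[where i=j and n=n]) auto
qed

lemma Kn_scale:
  assumes a: "0 \<le> a" and p: "p \<in> Kn n"
  shows "(\<lambda>i. a * p i) \<in> Kn n"
proof -
  have "a^2 * ((p 3)^2 + (p (n+2))^2) \<le> a^2 * (p 2)^2"
    using p unfolding Kn_iff by (simp add: mult_left_mono)
  then have "(a * p 3)^2 + (a * p (n+2))^2 \<le> (a * p 2)^2"
    by (simp add: power_mult_distrib distrib_left)
  then show ?thesis
    using a p sq_chain_scale[OF a] unfolding Kn_iff Rsp_def by auto
qed

lemma Kn_pow_sum_le:
  assumes p: "p \<in> Kn n" and n: "2 \<le> n" and p2: "p 2 = 1"
  shows "\<bar>p 0\<bar>^(2^n) + \<bar>p 1\<bar>^(2^n) \<le> 1"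
proof -
  have m: "1 \<le> n - 1" "n - 1 + 1 = n" using n by auto
  have "\<bar>p 0\<bar>^(2^n) \<le> (p 3)^2" "\<bar>p 1\<bar>^(2^n) \<le> (p (n+2))^2"
    using sq_chain_one_pow_le[of "\<lambda>i. p (2+i)" "p 0" "n-1"]
      sq_chain_one_pow_le[of "\<lambda>i. p (n+1+i)" "p 1" "n-1"] p p2 m
    unfolding Kn_iff by (simp_all add: numeral_3_eq_3)
  moreover have "(p 3)^2 + (p (n+2))^2 \<le> 1" using p p2 unfolding Kn_iff by simp
  ultimately show ?thesis by linarith
qed

lemma Kn_linear_bound:
  assumes p: "p \<in> Kn n" and n: "2 \<le> n" and c: "0 \<le> c1" "0 \<le> c2"
  shows "2^n * (c1^(2^n-1) * p 0 + c2^(2^n-1) * p 1)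
           \<le> (1 + (2^n - 1) * (c1^(2^n) + c2^(2^n))) * p 2"
proof (cases "p 2 = 0")
  case True
  then show ?thesis using Kn_abs_le[OF p n, of 0] Kn_abs_le[OF p n, of 1] by simp
next
  case False
  then have p2: "0 < p 2" using Kn_abs_le[OF p n, of 2] by simp
  define q where "q = (\<lambda>i. (1 / p 2) * p i)"
  have "q \<in> Kn n" unfolding q_def using p p2 by (intro Kn_scale) simp_all
  moreover have "q 2 = 1" unfolding q_def using p2 by simp
  ultimately have "\<bar>q 0\<bar>^(2^n) + \<bar>q 1\<bar>^(2^n) \<le> 1" using Kn_pow_sum_le n by blast
  then have "2^n * (c1^(2^n-1) * q 0 + c2^(2^n-1) * q 1) \<le> 1 + (2^n - 1) * (c1^(2^n) + c2^(2^n))"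
    using am_gm_power_pair[OF c] by fastforce
  also have "2^n * (c1^(2^n-1) * q 0 + c2^(2^n-1) * q 1)
      = 2^n * (c1^(2^n-1) * p 0 + c2^(2^n-1) * p 1) / p 2"
    unfolding q_def by (simp add: field_simps add_divide_distrib)
  finally show ?thesis using p2 by (simp add: divide_le_eq)
qed

lemma bipolar_Kn:
  assumes n: "2 \<le> n" and w: "w \<in> Rsp n" and hw: "\<And>z. z \<in> polar n (Kn n) \<Longrightarrow> ip n w z \<le> 0"
  shows "w \<in> Kn n"
proof -
  have j2: "2 < 2*n+1" using n by simp
  have abs_le: "\<bar>w j\<bar> \<le> w 2" if "j < 2*n+1" for j
    using bipolar_abs_le[OF that j2 _ hw] Kn_abs_le[OF _ n] by blast
  have w_abs: "\<bar>w j\<bar> \<le> w 2" for j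
    using abs_le[of j] abs_le[OF j2] w unfolding Rsp_def by (cases "j < 2*n+1") auto
  show ?thesis
  proof (cases "w 2 = 0")
    case True
    then have "w = (\<lambda>i. 0)" using w_abs by (intro ext) (metis abs_le_zero_iff)
    then show ?thesis by (simp add: Kn_iff sq_chain_def Rsp_def)
  next
    case False
    then have w2: "0 < w 2" using w_abs[of 2] by simp
    have "(w 3)^2 + (w (n+2))^2 \<le> (w 2)^2"
      by (rule bipolar_lorentz_cone[OF j2 _ _ _ hw less_imp_le[OF w2]]) (use n in \<open>auto simp: Kn_iff\<close>)
    moreover have "sq_chain (w 2) (\<lambda>i. w (2+i)) (w 0) (n-1)"
      by (rule bipolar_sq_chain[where C="Kn n", OF j2 _ _ _ _ hw w2])
        (use n Kn_chain_bounds[of _ n] in \<open>auto simp: Kn_iff\<close>)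
    moreover have "sq_chain (w 2) (\<lambda>i. w (n+1+i)) (w 1) (n-1)"
      by (rule bipolar_sq_chain[where C="Kn n", OF j2 _ _ _ _ hw w2])
        (use n Kn_chain_bounds[of _ n] in \<open>auto simp: Kn_iff\<close>)
    ultimately show ?thesis using w w2 unfolding Kn_iff by simp
  qed
qed

text \<open>In the coordinates \<open>(x1, x2, x3, y, z)\<close> this is the point
  \<open>(d1, d2, 1, d1^2^(n-1), ..., d1^2, d2^2^(n-1), ..., d2^2)\<close>, on which all inequalities of
  \<open>K\<^sub>n\<close> except the Lorentz one are equalities.\<close>

definition extreme_pt :: "nat \<Rightarrow> real \<Rightarrow> real \<Rightarrow> nat \<Rightarrow> real" where
  "extreme_pt n d1 d2 = (\<lambda>i.
     if i = 0 then d1 else if i = 1 then d2 else if i = 2 then 1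
     else if 3 \<le> i \<and> i \<le> n+1 then d1^(2^(n+2-i))
     else if n+2 \<le> i \<and> i \<le> 2*n then d2^(2^(2*n+1-i))
     else 0)"

lemma extreme_pt_in_Kn:
  assumes n: "2 \<le> n" and d: "d1^(2^n) + d2^(2^n) \<le> 1"
  shows "extreme_pt n d1 d2 \<in> Kn n"
proof -
  let ?q = "extreme_pt n d1 d2"
  have m: "1 \<le> n - 1" "n - 1 + 1 = n" using n by auto
  have "sq_chain 1 (\<lambda>i. ?q (2+i)) d1 (n-1)" "sq_chain 1 (\<lambda>i. ?q (n+1+i)) d2 (n-1)"
    using m by (auto intro!: sq_chain_one_powers simp: extreme_pt_def)
  moreover have "(?q 3)^2 + (?q (n+2))^2 \<le> (?q 2)^2"
  proof -
    have "?q 3 = d1^(2^(n-1))" "?q (n+2) = d2^(2^(n-1))" using n by (auto simp: extreme_pt_def)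
    moreover have "(d^(2^(n-1)))^2 = d^(2^n)" for d :: real
      using m by (metis power_mult power_Suc Suc_eq_plus1 mult.commute)
    ultimately show ?thesis using d by (simp add: extreme_pt_def)
  qed
  ultimately show ?thesis using n unfolding Kn_iff by (auto simp: extreme_pt_def Rsp_def)
qed

lemma Kn_eq_extreme_pt:
  assumes n: "2 \<le> n" and c: "0 \<le> c1" "0 \<le> c2" and S: "c1^(2^n) + c2^(2^n) = 1"
    and p: "p \<in> Kn n" and p2: "p 2 = 1"
    and pv: "c1^(2^n-1) * p 0 + c2^(2^n-1) * p 1 = 1"
  shows "p = extreme_pt n c1 c2"
proof -
  have "(2::nat)^2 \<le> 2^n" using n by (intro power_increasing) auto
  then have "p 0 = c1 \<and> p 1 = c2"
    using am_gm_power_pair_eq[OF _ c S Kn_pow_sum_le[OF p n p2] pv] by simp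
  then have s: "p 0 = c1" and t: "p 1 = c2" by simp_all
  have m: "1 \<le> n - 1" "n - 1 + 1 = n" using n by auto
  have chy: "sq_chain 1 (\<lambda>i. p (2+i)) c1 (n-1)" and chz: "sq_chain 1 (\<lambda>i. p (n+1+i)) c2 (n-1)"
    using p p2 s t unfolding Kn_iff by auto
  have top: "(p 3)^2 + (p (n+2))^2 \<le> 1" using p p2 unfolding Kn_iff by simp
  have "c1^(2^n) \<le> (p 3)^2" "c2^(2^n) \<le> (p (n+2))^2"
    using sq_chain_one_pow_le[OF chy m(1)] sq_chain_one_pow_le[OF chz m(1)] c m(2)
    by (simp_all add: numeral_3_eq_3)
  then have "(p 3)^2 \<le> c1^(2^n)" "(p (n+2))^2 \<le> c2^(2^n)" using top S by linarith+
  then have y: "\<forall>j\<in>{1..n-1}. p (2+j) = c1^(2^(n-j))"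
    and z: "\<forall>j\<in>{1..n-1}. p (n+1+j) = c2^(2^(n-j))"
    using sq_chain_one_tight[OF chy m(1) c(1)] sq_chain_one_tight[OF chz m(1) c(2)]
      Kn_chain_bounds[OF p n] m(2) by (simp_all add: numeral_3_eq_3)
  show ?thesis
  proof
    fix i show "p i = extreme_pt n c1 c2 i"
      using s t p2 y z p unfolding Kn_iff Rsp_def
      by (cases rule: coord_cases[where i=i and n=n]) (auto simp: extreme_pt_def)
  qed
qed

lemma Kn_eq_scaled_extreme_pt:
  assumes n: "2 \<le> n" and c: "0 \<le> c1" "0 \<le> c2" and S: "c1^(2^n) + c2^(2^n) = 1"
    and p: "p \<in> Kn n" and pv: "c1^(2^n-1) * p 0 + c2^(2^n-1) * p 1 = p 2"
  shows "p = (\<lambda>i. p 2 * extreme_pt n c1 c2 i)"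
proof (cases "p 2 = 0")
  case True
  then have "p i = 0" for i using Kn_abs_le[OF p n, of i] by simp
  with True show ?thesis by (simp add: fun_eq_iff)
next
  case False
  then have p2: "0 < p 2" using Kn_abs_le[OF p n, of 2] by simp
  define q where "q = (\<lambda>i. (1 / p 2) * p i)"
  have "q \<in> Kn n" unfolding q_def using p p2 by (intro Kn_scale) simp_all
  moreover have "q 2 = 1" "c1^(2^n-1) * q 0 + c2^(2^n-1) * q 1 = 1"
    unfolding q_def using p2 pv by (simp_all add: field_simps)
  ultimately have "q = extreme_pt n c1 c2" using Kn_eq_extreme_pt[OF n c S] by blast
  moreover have "p = (\<lambda>i. p 2 * q i)" unfolding q_def using p2 by simp
  ultimately show ?thesis by simp
qed

section \<open>The polar of \<open>K\<^sub>n\<close> at \<open>v\<close>\<close>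

lemma ip_vpt:
  assumes "1 \<le> n"
  shows "ip n (vpt u1 u2) k = u1 * k 0 + u2 * k 1 - k 2"
proof -
  have "vpt u1 u2 = (\<lambda>i. u1 * unit_vec 0 i + (u2 * unit_vec 1 i + (-1) * unit_vec 2 i))"
    by (auto simp: vpt_def unit_vec_def)
  then have "ip n k (vpt u1 u2) = u1 * k 0 + u2 * k 1 - k 2"
    using assms by (simp only: ip_add_right ip_scale_right) (simp add: ip_unit_vec)
  then show ?thesis by (metis ip_commute)
qed

lemma Kn_sum_abs_le: "k \<in> Kn n \<Longrightarrow> 2 \<le> n \<Longrightarrow> (\<Sum>i<2*n+1. \<bar>k i\<bar>) \<le> real (2*n+1) * k 2"
  using sum_mono[of "{..<2*n+1}" "\<lambda>i. \<bar>k i\<bar>" "\<lambda>i. k 2"] Kn_abs_le by simp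

lemma not_bdry_polar_Kn:
  assumes n: "2 \<le> n" and \<delta>: "0 < \<delta>" and v: "\<And>k. k \<in> Kn n \<Longrightarrow> ip n v k \<le> - \<delta> * k 2"
  shows "v \<notin> bdry n (polar n (Kn n))"
proof
  assume "v \<in> bdry n (polar n (Kn n))"
  moreover have "0 < \<delta> / real (2*n+1)" using \<delta> by simp
  ultimately obtain y where y: "y \<in> Rsp n" "y \<notin> polar n (Kn n)" "edist n v y < \<delta> / real (2*n+1)"
    unfolding bdry_def by blast
  have e: "edist n y v * real (2*n+1) \<le> \<delta>"
    using y(3) by (simp add: edist_commute pos_less_divide_eq)
  have "y \<in> polar n (Kn n)"
  proof (rule polarI[OF y(1)])
    fix k assume k: "k \<in> Kn n"
    have k2: "0 \<le> k 2" using Kn_abs_le[OF k n, of 2] by simp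
    have "ip n (\<lambda>i. y i - v i) k \<le> edist n y v * (\<Sum>i<2*n+1. \<bar>k i\<bar>)"
      by (rule ip_diff_le_edist)
    also have "\<dots> \<le> edist n y v * (real (2*n+1) * k 2)"
      using Kn_sum_abs_le[OF k n] edist_nonneg by (rule mult_left_mono)
    also have "\<dots> \<le> \<delta> * k 2"
      using mult_right_mono[OF e k2] by (simp only: mult.assoc)
    finally have "ip n y k - ip n v k \<le> \<delta> * k 2" by (simp only: ip_diff_left)
    then show "ip n y k \<le> 0" using v[OF k] by simp
  qed
  with y(2) show False by contradiction
qed

lemma vpt_in_polar_Kn_imp_pow_sum_le:
  assumes n: "2 \<le> n" and c: "0 \<le> c1" "0 \<le> c2"
    and v: "vpt (c1^(2^n-1)) (c2^(2^n-1)) \<in> polar n (Kn n)"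
  shows "c1^(2^n) + c2^(2^n) \<le> 1"
proof (rule ccontr)
  define N :: nat where "N = 2^n"
  define S where "S = c1^N + c2^N"
  assume "\<not> c1^(2^n) + c2^(2^n) \<le> 1"
  then have S1: "1 < S" unfolding S_def N_def by simp
  have "(2::nat)^2 \<le> 2^n" using n by (intro power_increasing) auto
  then have N: "2 \<le> N" unfolding N_def by simp
  \<comment> \<open>Test \<open>v\<close> against the extreme point over \<open>(c1, c2) / \<sigma>\<close>, which lies on the unit
    sphere of the \<open>l\<^sub>N\<close> norm.\<close>
  define \<sigma> where "\<sigma> = root N S"
  have \<sigma>: "\<sigma>^N = S" "1 < \<sigma>" unfolding \<sigma>_def using N S1 by (simp_all add: real_root_gt_1_iff)
  have "(c1/\<sigma>)^N + (c2/\<sigma>)^N = 1"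
    using \<sigma> S1 unfolding S_def by (simp add: power_divide add_divide_distrib[symmetric])
  then have "extreme_pt n (c1/\<sigma>) (c2/\<sigma>) \<in> Kn n"
    using extreme_pt_in_Kn[OF n] unfolding N_def by simp
  then have "ip n (vpt (c1^(N-1)) (c2^(N-1))) (extreme_pt n (c1/\<sigma>) (c2/\<sigma>)) \<le> 0"
    using v unfolding polar_def N_def by blast
  then have "c1^(N-1) * (c1/\<sigma>) + c2^(N-1) * (c2/\<sigma>) \<le> 1"
    using n by (simp add: ip_vpt extreme_pt_def)
  moreover have "c1^(N-1) * (c1/\<sigma>) + c2^(N-1) * (c2/\<sigma>) = \<sigma>^(N-1)"
  proof -
    have pm: "a^(N-1) * a = a^N" for a :: real
      by (rule power_minus_mult) (use N in simp)
    have "c1^(N-1) * c1 + c2^(N-1) * c2 = \<sigma>^(N-1) * \<sigma>"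
      using \<sigma>(1) unfolding pm S_def by simp
    then show ?thesis using \<sigma>(2) by (simp add: field_simps)
  qed
  moreover have "1 < \<sigma>^(N-1)" using \<sigma>(2) N by (simp add: one_less_power)
  ultimately show False by simp
qed

lemma vpt_not_bdry_if_pow_sum_less:
  assumes n: "2 \<le> n" and c: "0 \<le> c1" "0 \<le> c2" and S: "c1^(2^n) + c2^(2^n) < 1"
  shows "vpt (c1^(2^n-1)) (c2^(2^n-1)) \<notin> bdry n (polar n (Kn n))"
proof (rule not_bdry_polar_Kn[OF n])
  define \<theta> :: real where "\<theta> = (1 + (2^n - 1) * (c1^(2^n) + c2^(2^n))) / 2^n"
  have "(2^n - 1) * (c1^(2^n) + c2^(2^n)) < (2^n - 1) * (1::real)"
    using S n by (intro mult_strict_left_mono) (auto simp: one_less_power)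
  then show "0 < 1 - \<theta>" unfolding \<theta>_def by (simp add: field_simps)
  fix k assume k: "k \<in> Kn n"
  have "c1^(2^n-1) * k 0 + c2^(2^n-1) * k 1 \<le> \<theta> * k 2"
    using Kn_linear_bound[OF k n c] unfolding \<theta>_def by (simp add: field_simps)
  then show "ip n (vpt (c1^(2^n-1)) (c2^(2^n-1))) k \<le> - (1 - \<theta>) * k 2"
    using n by (simp add: ip_vpt algebra_simps)
qed

lemma normal_cone_polar_Kn_vpt:
  assumes n: "2 \<le> n" and c: "0 \<le> c1" "0 \<le> c2" and S: "c1^(2^n) + c2^(2^n) = 1"
  shows "normal_cone n (polar n (Kn n)) (vpt (c1^(2^n-1)) (c2^(2^n-1)))
           = {(\<lambda>i. \<alpha> * extreme_pt n c1 c2 i) | \<alpha>. \<alpha> \<ge> 0}"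
    (is "normal_cone n ?P ?v = ?ray")
proof -
  let ?q = "extreme_pt n c1 c2"
  have ipv: "ip n ?v k = c1^(2^n-1) * k 0 + c2^(2^n-1) * k 1 - k 2" for k
    using n by (simp add: ip_vpt)
  have v: "?v \<in> ?P"
  proof (rule polarI)
    show "?v \<in> Rsp n" using n by (simp add: vpt_def Rsp_def)
  next
    fix k assume "k \<in> Kn n"
    then show "ip n ?v k \<le> 0" using Kn_linear_bound[OF _ n c, of k] S ipv by simp
  qed
  have q: "?q \<in> Kn n" using extreme_pt_in_Kn[OF n] S by simp
  have "ip n ?q ?v = c1^(2^n-1) * ?q 0 + c2^(2^n-1) * ?q 1 - ?q 2"
    by (subst ip_commute) (rule ipv)
  also have "\<dots> = 0"
  proof -
    have "c^(2^n-1) * c = c^(2^n)" for c :: real by (rule power_minus_mult) simp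
    then show ?thesis using S by (simp add: extreme_pt_def)
  qed
  finally have q_v: "ip n ?q ?v = 0" .
  show ?thesis
  proof (intro set_eqI iffI)
    fix w assume "w \<in> normal_cone n ?P ?v"
    then have w: "w \<in> Rsp n" "\<And>z. z \<in> ?P \<Longrightarrow> ip n w z \<le> 0" "ip n w ?v = 0"
      using normal_cone_polar_iff[OF v] by auto
    have "w \<in> Kn n" using bipolar_Kn[OF n w(1,2)] .
    moreover have "c1^(2^n-1) * w 0 + c2^(2^n-1) * w 1 = w 2"
      using w(3) ipv[of w] by (simp add: ip_commute[of n w])
    ultimately have "w = (\<lambda>i. w 2 * ?q i)" by (rule Kn_eq_scaled_extreme_pt[OF n c S])
    moreover have "0 \<le> w 2" using Kn_abs_le[OF \<open>w \<in> Kn n\<close> n, of 2] by simp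
    ultimately show "w \<in> ?ray" by blast
  next
    fix w assume "w \<in> ?ray"
    then obtain \<alpha> where \<alpha>: "0 \<le> \<alpha>" and w: "w = (\<lambda>i. \<alpha> * ?q i)" by blast
    have "w \<in> Rsp n" using q unfolding w Kn_iff Rsp_def by simp
    moreover have "ip n w z \<le> 0" if "z \<in> ?P" for z
      using that q \<alpha> unfolding w ip_scale_left polar_def
      by (auto simp: ip_commute[of n ?q] mult_nonneg_nonpos)
    moreover have "ip n w ?v = 0" using q_v unfolding w ip_scale_left by simp
    ultimately show "w \<in> normal_cone n ?P ?v" using normal_cone_polar_iff[OF v] by blast
  qed
qed

lemma powr_inverse_power:
  fixes u :: real
  assumes "0 \<le> u" "0 < k"
  shows "(u powr (1 / real k))^k = u"
  using assms by (cases "u = 0") (simp_all add: powr_power)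

lemma powr_lam_div_power:
  fixes u :: real
  assumes u: "0 \<le> u" and j: "j \<le> n"
  shows "u powr (lam n / 2^j) = (u powr (1 / (2^n - 1)))^(2^(n-j))"
proof (cases "u = 0")
  case False
  have "(2::real)^(n-j) = 2^n / 2^j" using j by (simp add: power_diff)
  then have "real (2^(n-j)) * (1 / (2^n - 1)) = lam n / 2^j"
    unfolding lam_def by simp
  then show ?thesis using False by (simp add: powr_power)
qed simp

lemma wpt_eq_extreme_pt:
  assumes "0 \<le> u1" "0 \<le> u2"
  shows "wpt n u1 u2 = extreme_pt n (u1 powr (1 / (2^n - 1))) (u2 powr (1 / (2^n - 1)))"
proof
  fix i
  show "wpt n u1 u2 i = extreme_pt n (u1 powr (1 / (2^n - 1))) (u2 powr (1 / (2^n - 1))) i"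
    using powr_lam_div_power[OF assms(1)] powr_lam_div_power[OF assms(2)]
    by (cases rule: coord_cases[where i=i and n=n]) (auto simp: wpt_def extreme_pt_def)
qed

theorem lemma3:
  fixes n :: nat and u1 u2 :: real
  assumes "n \<ge> 2" and "u1 \<ge> 0" and "u2 \<ge> 0"
    and "vpt u1 u2 \<in> bdry n (polar n (Kn n))"
  shows "normal_cone n (polar n (Kn n)) (vpt u1 u2)
           = {(\<lambda>i. \<alpha> * wpt n u1 u2 i) | \<alpha>. \<alpha> \<ge> 0}"
proof -
  define c1 c2 where "c1 = u1 powr (1 / (2^n - 1))" and "c2 = u2 powr (1 / (2^n - 1))"
  have c: "0 \<le> c1" "0 \<le> c2" unfolding c1_def c2_def by simp_all
  have "(2::nat)^1 < 2^n" using assms(1) by (intro power_strict_increasing) auto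
  then have "real (2^n - 1) = 2^n - 1" "0 < (2::nat)^n - 1" by (simp_all add: of_nat_diff)
  then have u: "u1 = c1^(2^n-1)" "u2 = c2^(2^n-1)"
    unfolding c1_def c2_def using powr_inverse_power assms(2,3) by metis+
  have v: "vpt (c1^(2^n-1)) (c2^(2^n-1)) \<in> bdry n (polar n (Kn n))"
    using assms(4) unfolding u .
  have "c1^(2^n) + c2^(2^n) \<le> 1"
    using vpt_in_polar_Kn_imp_pow_sum_le[OF assms(1) c] bdry_polar_subset v by blast
  moreover have "\<not> c1^(2^n) + c2^(2^n) < 1"
    using vpt_not_bdry_if_pow_sum_less[OF assms(1) c] v by blast
  ultimately have "c1^(2^n) + c2^(2^n) = 1" by simp
  then have "normal_cone n (polar n (Kn n)) (vpt u1 u2) = {(\<lambda>i. \<alpha> * extreme_pt n c1 c2 i) | \<alpha>. \<alpha> \<ge> 0}"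
    unfolding u by (rule normal_cone_polar_Kn_vpt[OF assms(1) c])
  moreover have "wpt n u1 u2 = extreme_pt n c1 c2"
    unfolding c1_def c2_def by (rule wpt_eq_extreme_pt[OF assms(2,3)])
  ultimately show ?thesis by simp
qed

end
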